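(* Let $\lambda\ge0$ and $J_\lambda(\theta)=\lambda\theta-(\lambda-1)\frac{1-F(\theta)}{f(\theta)}$, and assume $J_\lambda$ is nondecreasing on $\Theta$. Then for every $\theta_0\in[0,\bar\theta)$, the function $s(\theta)=F(\theta)$ on $[\theta_0,\bar\theta]$ maximizes $\int_{\theta_0}^{\bar\theta}J_\lambda(\theta)s(\theta)\,dF(\theta)$ over $s\in\mathcal S(\theta_0)$. Consequently, with the participation cutoff $\theta_0$ fixed and the cutoff type's payoff fixed (as it is under the nonnegative-price constraint), the social welfare $W_S=\int_{\theta_0}^{\bar\theta}(\lambda p(\theta)+U(\theta))\,dF(\theta)$ is maximized by full separation of participants.
   Context: Let $0<\bar\theta<\infty$, $\Theta=[0,\bar\theta]$, $F$ a cdf on $\Theta$ with continuous, strictly positive density $f$, $dF=f\,d\theta$. For $\theta_0\in[0,\bar\theta)$ and bounded measurable $a,b$ on $[\theta_0,\bar\theta]$, write $b\in\mathrm{MPS}(a)$ if $\int_x^{\bar\theta}b\,dF\le\int_x^{\bar\theta}a\,dF$ for all $x\in[\theta_0,\bar\theta]$, with equality at $x=\theta_0$. $\mathcal S(\theta_0)$ is the set of nondecreasing $s:[\theta_0,\bar\theta]\to[0,1]$ with $s\in\mathrm{MPS}(F)$. In an incentive-compatible mechanism with cutoff $\theta_0$, interim status $s$ and prices $p$, a participant's payoff is $U(\theta)=\theta s(\theta)-p(\theta)+v(\theta)$ with $v$ twice differentiable, $v'\ge0$, $v''\le0$, and $U(\theta)=U(\theta_0)+\int_{\theta_0}^\theta(s(x)+v'(x))dx$;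 then $W_S=\int_{\theta_0}^{\bar\theta}J_\lambda s\,dF+C$ where $C$ depends only on $\theta_0$, $U(\theta_0)$, $v$, $F$, $\lambda$. *)

theory Defs
  imports "HOL-Analysis.Analysis"
begin

text \<open>Integration against dF = f d\<theta> on [x, \<theta>bar] is the integral of (g * f) over {x..\<theta>bar}.\<close>

definition MPS :: "(real \<Rightarrow> real) \<Rightarrow> real \<Rightarrow> real \<Rightarrow> (real \<Rightarrow> real) \<Rightarrow> (real \<Rightarrow> real) \<Rightarrow> bool" where
  "MPS f \<theta>0 \<theta>bar a b \<longleftrightarrow>
     (\<forall>x\<in>{\<theta>0..\<theta>bar}. integral {x..\<theta>bar} (\<lambda>t. b t * f t) \<le> integral {x..\<theta>bar} (\<lambda>t. a t * f t))
     \<and> integral {\<theta>0..\<theta>bar} (\<lambda>t. b t * f t) = integral {\<theta>0..\<theta>bar} (\<lambda>t. a t * f t)"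

definition Sset :: "(real \<Rightarrow> real) \<Rightarrow> (real \<Rightarrow> real) \<Rightarrow> real \<Rightarrow> real \<Rightarrow> (real \<Rightarrow> real) set" where
  "Sset F f \<theta>0 \<theta>bar = {s. mono_on {\<theta>0..\<theta>bar} s \<and> (\<forall>t\<in>{\<theta>0..\<theta>bar}. 0 \<le> s t \<and> s t \<le> 1)
                          \<and> MPS f \<theta>0 \<theta>bar F s}"

definition Jlam :: "real \<Rightarrow> (real \<Rightarrow> real) \<Rightarrow> (real \<Rightarrow> real) \<Rightarrow> real \<Rightarrow> real" where
  "Jlam lam F f \<theta> = lam * \<theta> - (lam - 1) * (1 - F \<theta>) / f \<theta>"

end

theory Submission
  imports Defs
begin

text \<open>Since \<open>F\<close> is itself nondecreasing, \<open>F \<in> \<S>(\<theta>\<^sub>0)\<close>. For any other \<open>s \<in> \<S>(\<theta>\<^sub>0)\<close> put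
  \<open>g = (F - s) f\<close>: the MPS condition says that every upper tail integral of \<open>g\<close> is
  nonnegative and the whole integral vanishes. By the second mean value theorem,
  \<open>\<integral> J g = J(\<theta>\<^sub>0) \<integral>\<^sub>\<theta>\<^sub>0\<^sup>c g + J(\<theta>bar) \<integral>\<^sub>c\<^sup>\<theta>bar g = (J(\<theta>bar) - J(\<theta>\<^sub>0)) \<integral>\<^sub>c\<^sup>\<theta>bar g \<ge> 0\<close>
  for some \<open>c\<close>, since \<open>J\<close> is nondecreasing.\<close>

lemma mono_on_mult_integrable:
  fixes g h :: "real \<Rightarrow> real"
  assumes "h integrable_on {a..b}" "a \<le> b" "mono_on {a..b} g"
  shows "(\<lambda>x. g x * h x) integrable_on {a..b}"
proof -
  have "\<And>x y. \<lbrakk>a \<le> x; x \<le> y; y \<le> b\<rbrakk> \<Longrightarrow> g x \<le> g y"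
    using assms(3) by (auto simp: mono_on_def)
  from second_mean_value_theorem_full[where g=g, OF assms(1,2) this] show ?thesis
    by blast
qed

lemma integral_mono_weight_nonneg:
  fixes g J :: "real \<Rightarrow> real"
  assumes "a \<le> b" "g integrable_on {a..b}" "mono_on {a..b} J"
    and tails: "\<And>x. x \<in> {a..b} \<Longrightarrow> integral {x..b} g \<ge> 0"
    and total: "integral {a..b} g = 0"
  shows "integral {a..b} (\<lambda>x. J x * g x) \<ge> 0"
proof -
  have J_le: "\<And>x y. \<lbrakk>a \<le> x; x \<le> y; y \<le> b\<rbrakk> \<Longrightarrow> J x \<le> J y"
    using assms(3) by (auto simp: mono_on_def)
  obtain c where c: "c \<in> {a..b}" and mvt:
    "((\<lambda>x. J x * g x) has_integral (J a * integral {a..c} g + J b * integral {c..b} g)) {a..b}"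
    using second_mean_value_theorem_full[where g=J, OF assms(2,1) J_le] by blast
  have "integral {a..c} g + integral {c..b} g = 0"
    using Henstock_Kurzweil_Integration.integral_combine[where a=a and c=c and b=b and f=g] c assms(2) total by auto
  then have "J a * integral {a..c} g + J b * integral {c..b} g = (J b - J a) * integral {c..b} g"
    by (simp add: algebra_simps eq_neg_iff_add_eq_0[symmetric])
  also have "\<dots> \<ge> 0"
    using J_le[of a b] assms(1) tails[OF c] by simp
  finally show ?thesis
    using integral_unique[OF mvt] by simp
qed

lemma MPS_integral_mono_weight_le:
  fixes f J p q :: "real \<Rightarrow> real"
  assumes "a \<le> b" "f integrable_on {a..b}" "mono_on {a..b} J"
    and "mono_on {a..b} p" "mono_on {a..b} q"
    and "MPS f a b p q"
  shows "integral {a..b} (\<lambda>t. J t * q t * f t) \<le> integral {a..b} (\<lambda>t. J t * p t * f t)"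
proof -
  have pf: "(\<lambda>t. p t * f t) integrable_on {a..b}" and qf: "(\<lambda>t. q t * f t) integrable_on {a..b}"
    using mono_on_mult_integrable assms(1,2,4,5) by blast+
  define g where "g t = p t * f t - q t * f t" for t
  have integral_g: "integral {x..y} g
      = integral {x..y} (\<lambda>t. p t * f t) - integral {x..y} (\<lambda>t. q t * f t)"
    if "a \<le> x" "y \<le> b" for x y
    unfolding g_def using that
    by (intro integral_diff integrable_on_subinterval[OF pf] integrable_on_subinterval[OF qf]) auto
  have "integral {a..b} (\<lambda>t. J t * g t) \<ge> 0"
  proof (rule integral_mono_weight_nonneg[OF assms(1) _ assms(3)])
    show "g integrable_on {a..b}"
      unfolding g_def using pf qf by (rule integrable_diff)
    show "integral {x..b} g \<ge> 0" if "x \<in> {a..b}" for x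
      using assms(6) integral_g[of x b] that by (auto simp: MPS_def)
    show "integral {a..b} g = 0"
      using assms(6) integral_g[of a b] by (auto simp: MPS_def)
  qed
  moreover have "integral {a..b} (\<lambda>t. J t * g t)
      = integral {a..b} (\<lambda>t. J t * (p t * f t)) - integral {a..b} (\<lambda>t. J t * (q t * f t))"
    unfolding g_def right_diff_distrib
    by (intro integral_diff mono_on_mult_integrable pf qf assms(1,3))
  ultimately show ?thesis
    by (simp add: mult.assoc)
qed

lemma cdf_mono_on:
  fixes f F :: "real \<Rightarrow> real"
  assumes "continuous_on {0..b} f" "\<forall>t\<in>{0..b}. 0 < f t"
    and "\<forall>x\<in>{0..b}. F x = integral {0..x} f"
  shows "mono_on {0..b} F"
proof (rule mono_onI)
  fix x y assume xy: "x \<in> {0..b}" "y \<in> {0..b}" "x \<le> y"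
  have "f integrable_on {0..z}" if "z \<le> y" for z
    using xy that by (intro integrable_continuous_interval continuous_on_subset[OF assms(1)]) auto
  then have "integral {0..x} f \<le> integral {0..y} f"
    using xy assms(2) by (intro integral_subset_le) (auto intro: less_imp_le)
  then show "F x \<le> F y"
    using assms(3) xy by auto
qed

theorem proposition5:
  fixes F f :: "real \<Rightarrow> real" and \<theta>bar lam :: real
  assumes thbar: "0 < \<theta>bar"
    and f_cont: "continuous_on {0..\<theta>bar} f"
    and f_pos: "\<forall>t\<in>{0..\<theta>bar}. 0 < f t"
    and F_dens: "\<forall>x\<in>{0..\<theta>bar}. F x = integral {0..x} f"
    and F_top: "F \<theta>bar = 1"
    and lam: "0 \<le> lam"
    and J_mono: "mono_on {0..\<theta>bar} (Jlam lam F f)"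
  shows "\<forall>\<theta>0\<in>{0..<\<theta>bar}.
           F \<in> Sset F f \<theta>0 \<theta>bar \<and>
           (\<forall>s\<in>Sset F f \<theta>0 \<theta>bar.
              integral {\<theta>0..\<theta>bar} (\<lambda>t. Jlam lam F f t * s t * f t)
                \<le> integral {\<theta>0..\<theta>bar} (\<lambda>t. Jlam lam F f t * F t * f t))"
proof
  fix a assume a: "a \<in> {0..<\<theta>bar}"
  then have sub: "{a..\<theta>bar} \<subseteq> {0..\<theta>bar}" and ab: "a \<le> \<theta>bar"
    by auto
  have F_mono: "mono_on {0..\<theta>bar} F"
    using cdf_mono_on[OF f_cont f_pos F_dens] .
  have "F 0 = 0"
    using F_dens thbar by auto
  then have "0 \<le> F t \<and> F t \<le> 1" if "t \<in> {a..\<theta>bar}" for t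
    using F_top mono_onD[OF F_mono, of 0 t] mono_onD[OF F_mono, of t \<theta>bar] that sub by auto
  then have F_in: "F \<in> Sset F f a \<theta>bar"
    using mono_on_subset[OF F_mono sub] by (simp add: Sset_def MPS_def)
  have f_int: "f integrable_on {a..\<theta>bar}"
    using sub by (intro integrable_continuous_interval continuous_on_subset[OF f_cont])
  show "F \<in> Sset F f a \<theta>bar \<and> (\<forall>s\<in>Sset F f a \<theta>bar.
          integral {a..\<theta>bar} (\<lambda>t. Jlam lam F f t * s t * f t)
            \<le> integral {a..\<theta>bar} (\<lambda>t. Jlam lam F f t * F t * f t))"
    using F_in MPS_integral_mono_weight_le[OF ab f_int mono_on_subset[OF J_mono sub]
        mono_on_subset[OF F_mono sub]]
    by (auto simp: Sset_def)
qed

end
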